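(* For $n\in\mathbb{Z}^+$ we have $$\begin{aligned}&t(1,4,7;n)=2N(1,4,7;2n+3)&&\text{for } n\equiv 1\pmod 4,\\ &t(1,7,12;n)=2N(1,7,12;2n+5)&&\text{for } n\equiv 3\pmod 4,\\ &t(1,7,28;n)=2N(1,7,28;2n+9)&&\text{for } n\equiv 1\pmod 4,\\ &t(3,4,21;n)=2N(3,4,21;2n+7)&&\text{for } n\equiv 1\pmod 4,\\ &t(3,21,28;n)=2N(3,21,28;2n+13)&&\text{for } n\equiv 1\pmod 4.\end{aligned}$$
   Context: $\mathbb{Z}^+$ is the set of positive integers. For $a,b,c\in\mathbb{Z}^+$ and nonnegative integer $n$, $N(a,b,c;n)$ denotes the number of triples $(x,y,z)\in\mathbb{Z}^3$ with $n=ax^2+by^2+cz^2$, and $t(a,b,c;n)$ denotes the number of triples $(x,y,z)\in\mathbb{Z}^3$ with $n=a\frac{x(x+1)}2+b\frac{y(y+1)}2+c\frac{z(z+1)}2$. *)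

theory Defs
  imports Main
begin

definition N :: "nat \<Rightarrow> nat \<Rightarrow> nat \<Rightarrow> nat \<Rightarrow> nat" where
  "N a b c n = card {(x::int, y::int, z::int).
      int n = int a * x\<^sup>2 + int b * y\<^sup>2 + int c * z\<^sup>2}"

definition t :: "nat \<Rightarrow> nat \<Rightarrow> nat \<Rightarrow> nat \<Rightarrow> nat" where
  "t a b c n = card {(x::int, y::int, z::int).
      int n = int a * (x * (x + 1) div 2) + int b * (y * (y + 1) div 2)
              + int c * (z * (z + 1) div 2)}"

end

theory Submission
  imports Defs
begin

(* Writing u = 2x + 1, we have (2x+1)^2 = 8 x(x+1)/2 + 1, so t(a,b,c;n) counts the representations
   of 8n + a + b + c = 4m by a u^2 + b v^2 + c w^2 with u, v, w all odd, where m is the argument of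
   N in the identity.  The sign changes of one or two coordinates act freely on these odd
   representations; a 2-adic condition (16 divides exactly one of u - 3w and u + 3w, and the like)
   selects one representative per orbit.  An explicit integral linear substitution, which
   multiplies the form by 4, maps the representations of m bijectively onto these normalised odd
   representations, either all of them (forms 1,4,7 and 1,7,28) or one of two halves exchanged by
   a sign change (the other three forms).  The residue of m modulo 8 fixes the parities that make
   the substitution and its inverse integral, and every halving contributes the factor 2. *)

definition reps :: "int \<Rightarrow> int \<Rightarrow> int \<Rightarrow> int \<Rightarrow> (int \<times> int \<times> int) set" where
  "reps a b c m = {(x, y, z). a * x\<^sup>2 + b * y\<^sup>2 + c * z\<^sup>2 = m}"

definition odd_reps :: "int \<Rightarrow> int \<Rightarrow> int \<Rightarrow> int \<Rightarrow> (int \<times> int \<times> int) set" where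
  "odd_reps a b c m = {(x, y, z). odd x \<and> odd y \<and> odd z \<and> a * x\<^sup>2 + b * y\<^sup>2 + c * z\<^sup>2 = m}"

section \<open>Odd squares and ternary forms modulo 8\<close>

lemma odd_square_eq_triangular:
  fixes x :: int
  shows "(2 * x + 1)\<^sup>2 = 8 * (x * (x + 1) div 2) + 1"
proof -
  have "(2 * x + 1)\<^sup>2 = 4 * (x * (x + 1)) + 1" by (simp add: power2_eq_square algebra_simps)
  also have "x * (x + 1) = 2 * (x * (x + 1) div 2)" by simp
  finally show ?thesis by simp
qed

lemma odd_squareE:
  fixes x :: int
  assumes "odd x"
  obtains j where "x\<^sup>2 = 8 * j + 1"
  using assms by (auto elim!: oddE simp: odd_square_eq_triangular)

lemma odd_mult_square_mod8:
  fixes b k :: int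
  assumes "odd b"
  shows "(b * k\<^sup>2) mod 8 = (if odd k then b else 2 * k) mod 8"
proof (cases "odd k")
  case True
  then obtain j where "k\<^sup>2 = 8 * j + 1" by (rule odd_squareE)
  then have "b * k\<^sup>2 = b + 8 * (b * j)" by (simp add: algebra_simps)
  with True show ?thesis by simp
next
  case False
  then obtain j where k: "k = 2 * j" by blast
  have "even (b * j\<^sup>2 - j)" using assms by simp
  then have "8 dvd 4 * (b * j\<^sup>2 - j)" by fastforce
  then have "8 dvd b * k\<^sup>2 - 2 * k" unfolding k by (simp add: power2_eq_square algebra_simps)
  with False show ?thesis by (simp add: mod_eq_dvd_iff)
qed

lemma mult_square_mod8_of_mod8_eq_4:
  fixes c k :: int
  assumes "c mod 8 = 4"
  shows "(c * k\<^sup>2) mod 8 = (4 * k) mod 8"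
proof -
  obtain d where c: "c = 8 * d + 4" using assms by (metis mod_div_mult_eq add.commute mult.commute)
  have "even (k\<^sup>2 - k)" by simp
  then have "8 dvd 8 * d * k\<^sup>2 + 4 * (k\<^sup>2 - k)" by fastforce
  then have "8 dvd c * k\<^sup>2 - 4 * k" unfolding c by (simp add: algebra_simps)
  then show ?thesis by (simp add: mod_eq_dvd_iff)
qed

lemma ternary_rep_parities:
  fixes a b c p q r m :: int
  assumes "a * p\<^sup>2 + b * q\<^sup>2 + c * r\<^sup>2 = m"
    and "odd a" "odd b" "(a - b) mod 4 = 2" "c mod 8 = 4" "m mod 8 = (a + 4) mod 8"
  shows "odd p \<and> (q + 2 * r) mod 4 = 2"
proof -
  have "m mod 8 = ((if odd p then a else 2 * p) + (if odd q then b else 2 * q) + 4 * r) mod 8"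
    unfolding assms(1)[symmetric] using assms(2,3,5)
    by (intro mod_add_cong odd_mult_square_mod8 mult_square_mod8_of_mod8_eq_4)
  with assms(6) have E: "8 dvd (if odd p then a else 2 * p) + (if odd q then b else 2 * q) + 4 * r - (a + 4)"
    by (simp add: mod_eq_dvd_iff)
  consider "odd p" "odd q" | "odd p" "even q" | "even p" "odd q" | "even p" "even q" by blast
  then show ?thesis
  proof cases
    case 1
    with E have "8 dvd a + b + 4 * r - (a + 4)" by simp
    with \<open>odd b\<close> have False by presburger
    then show ?thesis ..
  next
    case 2
    with E have "8 dvd a + 2 * q + 4 * r - (a + 4)" by simp
    then have "(q + 2 * r) mod 4 = 2" by presburger
    with \<open>odd p\<close> show ?thesis by simp
  next
    case 3
    with E have "8 dvd 2 * p + b + 4 * r - (a + 4)" by simp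
    with \<open>even p\<close> \<open>(a - b) mod 4 = 2\<close> have False by presburger
    then show ?thesis ..
  next
    case 4
    with E have "8 dvd 2 * p + 2 * q + 4 * r - (a + 4)" by simp
    with \<open>odd a\<close> have False by presburger
    then show ?thesis ..
  qed
qed

section \<open>Two-adic sign normalisation\<close>

lemma dvd_mult_iff_of_mod4_eq_2:
  fixes a b :: int
  assumes "a mod 4 = 2"
  shows "2 * 2 ^ k dvd a * b \<longleftrightarrow> 2 ^ k dvd b"
proof -
  have "\<exists>a'. a = 2 * a' \<and> odd a'" using assms by presburger
  then obtain a' where a: "a = 2 * a'" and "odd a'" by blast
  then have "coprime (2 ^ k) a'" by simp
  then have "2 ^ k dvd a' * b \<longleftrightarrow> 2 ^ k dvd b" by (rule coprime_dvd_mult_right_iff)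
  then show ?thesis by (simp add: a mult.assoc)
qed

lemma dvd_exactly_one_of_mult:
  fixes a b :: int
  assumes "(a + b) mod 4 = 2" "even a" "2 * 2 ^ k dvd a * b" "k \<ge> 2"
  shows "2 ^ k dvd b \<longleftrightarrow> \<not> 2 ^ k dvd a"
proof -
  have not_dvd: "\<not> 2 ^ k dvd c" if "c mod 4 = 2" for c :: int
  proof
    assume "2 ^ k dvd c"
    moreover have "(4::int) dvd 2 ^ k" using \<open>k \<ge> 2\<close> le_imp_power_dvd[of 2 k "2::int"] by simp
    ultimately have "4 dvd c" by (rule dvd_trans[rotated])
    with that show False by presburger
  qed
  from assms(1,2) have "a mod 4 = 2 \<or> b mod 4 = 2" by presburger
  then show ?thesis
  proof
    assume "a mod 4 = 2"
    then show ?thesis using assms(3) not_dvd dvd_mult_iff_of_mod4_eq_2 by blast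
  next
    assume "b mod 4 = 2"
    then show ?thesis using assms(3) not_dvd dvd_mult_iff_of_mod4_eq_2[of b k a]
      by (simp add: mult.commute)
  qed
qed

lemma dvd_16_exactly_one_of_mult_mod32_eq_16:
  fixes a b :: int
  assumes "(a + b) mod 4 = 2" "even a" "(a * b) mod 32 = 16"
  shows "16 dvd b - 8 \<longleftrightarrow> \<not> 16 dvd a - 8"
proof -
  have "16 dvd x \<and> \<not> 32 dvd x" if "x mod 32 = 16" for x :: int using that by presburger
  then have ab: "16 dvd a * b" "\<not> 32 dvd a * b" "16 dvd b * a" "\<not> 32 dvd b * a"
    using assms(3) by (simp_all add: mult.commute)
  have cofactor: "16 dvd d - 8" if "c mod 4 = 2" "16 dvd c * d" "\<not> 32 dvd c * d" for c d :: int
  proof -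
    have "8 dvd d" "\<not> 16 dvd d"
      using that dvd_mult_iff_of_mod4_eq_2[OF that(1), of 3 d] dvd_mult_iff_of_mod4_eq_2[OF that(1), of 4 d]
      by simp_all
    then show ?thesis by presburger
  qed
  from assms(1,2) have "a mod 4 = 2 \<or> b mod 4 = 2" by presburger
  then show ?thesis
  proof
    assume "a mod 4 = 2"
    with cofactor[OF this ab(1,2)] show ?thesis by presburger
  next
    assume "b mod 4 = 2"
    with cofactor[OF this ab(3,4)] show ?thesis by presburger
  qed
qed

lemma mod32_eq_16_of_three_mult:
  fixes x t :: int
  assumes "3 * x = 16 + 32 * t"
  shows "x mod 32 = 16"
proof -
  \<comment> \<open>11 is the inverse of 3 modulo 32\<close>
  have "x = 16 + 32 * (5 + 11 * t - x)" using assms by simp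
  then have "x mod 32 = (16 + 32 * (5 + 11 * t - x)) mod 32" by (rule arg_cong)
  also have "\<dots> = 16" by (simp only: mod_mult_self2) simp
  finally show ?thesis .
qed

lemma dvd_32_add_iff_not_dvd_diff:
  fixes a w :: int
  assumes "16 dvd a - 8" "odd w"
  shows "32 dvd a + 8 * w \<longleftrightarrow> \<not> 32 dvd a - 8 * w"
  using assms by presburger

lemma dvd_16_3_add_7_of_dvd_16_sub_3:
  fixes a b :: int
  assumes "16 dvd a - 3 * b - 8"
  shows "16 dvd 3 * a + 7 * b - 8"
proof -
  have "3 * a + 7 * b - 8 = 3 * (a - 3 * b - 8) + 16 * (b + 1)" by simp
  then show ?thesis by (metis assms dvd_add dvd_mult dvd_triv_left)
qed

section \<open>Counting representations\<close>

lemma card_eq_twice_card_Int_if_involution: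
  assumes "\<And>x. x \<in> A \<Longrightarrow> f x \<in> A" "\<And>x. x \<in> A \<Longrightarrow> f (f x) = x"
    and "\<And>x. x \<in> A \<Longrightarrow> f x \<in> H \<longleftrightarrow> x \<notin> H"
  shows "card A = 2 * card (A \<inter> H)"
proof -
  have "bij_betw (\<lambda>(x, b). if b then x else f x) ((A \<inter> H) \<times> (UNIV :: bool set)) A"
    by (rule bij_betw_byWitness[where f' = "\<lambda>x. if x \<in> H then (x, True) else (f x, False)"])
      (use assms in auto)
  then have "card A = card ((A \<inter> H) \<times> (UNIV :: bool set))" by (simp add: bij_betw_same_card)
  then show ?thesis by (simp add: card_cartesian_product)
qed

lemma N_eq_card_reps: "N a b c n = card (reps (int a) (int b) (int c) (int n))"
  unfolding N_def reps_def by (simp add: eq_commute)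

lemma t_eq_card_odd_reps:
  "t a b c n = card (odd_reps (int a) (int b) (int c) (8 * int n + int a + int b + int c))"
proof -
  let ?tri = "\<lambda>x::int. x * (x + 1) div 2"
  let ?T = "{(x, y, z). int n = int a * ?tri x + int b * ?tri y + int c * ?tri z}"
  let ?f = "\<lambda>(x::int, y::int, z::int). (2 * x + 1, 2 * y + 1, 2 * z + 1)"
  have "odd_reps (int a) (int b) (int c) (8 * int n + int a + int b + int c) = ?f ` ?T"
  proof (intro equalityI subsetI)
    fix s assume "s \<in> odd_reps (int a) (int b) (int c) (8 * int n + int a + int b + int c)"
    then obtain x y z where "s = ?f (x, y, z)"
      and "int a * (2 * x + 1)\<^sup>2 + int b * (2 * y + 1)\<^sup>2 + int c * (2 * z + 1)\<^sup>2
             = 8 * int n + int a + int b + int c"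
      by (auto simp: odd_reps_def elim!: oddE)
    then show "s \<in> ?f ` ?T"
      by (intro image_eqI[of _ _ "(x, y, z)"]) (auto simp: odd_square_eq_triangular ring_distribs)
  next
    fix s assume "s \<in> ?f ` ?T"
    then obtain x y z where "s = ?f (x, y, z)"
      and "int n = int a * ?tri x + int b * ?tri y + int c * ?tri z"
      by auto
    then show "s \<in> odd_reps (int a) (int b) (int c) (8 * int n + int a + int b + int c)"
      by (simp add: odd_reps_def odd_square_eq_triangular ring_distribs)
  qed
  moreover have "inj ?f" by (auto simp: inj_def)
  ultimately show ?thesis unfolding t_def by (simp add: card_image inj_on_subset)
qed

lemma t_eq_twice_N_if_card_odd_reps:
  assumes "8 * n + a + b + c = 4 * m"
    and "card (odd_reps (int a) (int b) (int c) (4 * int m))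
           = 2 * card (reps (int a) (int b) (int c) (int m))"
  shows "t a b c n = 2 * N a b c m"
proof -
  have "8 * int n + int a + int b + int c = 4 * int m" using assms(1) by linarith
  with assms(2) show ?thesis by (simp add: t_eq_card_odd_reps N_eq_card_reps)
qed

section \<open>The form x^2 + 4y^2 + 7z^2\<close>

lemma reps_1_4_7_parities:
  assumes "(x, y, z) \<in> reps 1 4 7 m" "m mod 8 = 5"
  shows "odd x \<and> (z + 2 * y) mod 4 = 2"
  using ternary_rep_parities[of 1 x 7 z 4 y m] assms by (simp add: reps_def ac_simps)

lemma odd_reps_1_4_7_flip_w:
  assumes "(u, v, w) \<in> odd_reps 1 4 7 (4 * m)" "m mod 8 = 5"
  shows "16 dvd u + 3 * w \<longleftrightarrow> \<not> 16 dvd u - 3 * w"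
proof -
  from assms(1) have "odd u" "odd v" "odd w" and eq: "u\<^sup>2 + 4 * v\<^sup>2 + 7 * w\<^sup>2 = 4 * m"
    by (simp_all add: odd_reps_def)
  obtain j k where "v\<^sup>2 = 8 * j + 1" "w\<^sup>2 = 8 * k + 1"
    using \<open>odd v\<close> \<open>odd w\<close> by (meson odd_squareE)
  moreover obtain i where "m = 8 * i + 5" using assms(2) by (metis mod_div_mult_eq add.commute mult.commute)
  ultimately have "u\<^sup>2 - 9 * w\<^sup>2 = 32 * (i - j - 4 * k)" using eq by simp
  moreover have "(u - 3 * w) * (u + 3 * w) = u\<^sup>2 - 9 * w\<^sup>2" by (simp add: power2_eq_square algebra_simps)
  ultimately have "32 dvd (u - 3 * w) * (u + 3 * w)" by simp
  moreover have "(u - 3 * w + (u + 3 * w)) mod 4 = 2" using \<open>odd u\<close> by presburger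
  moreover have "even (u - 3 * w)" using \<open>odd u\<close> \<open>odd w\<close> by simp
  ultimately show ?thesis using dvd_exactly_one_of_mult[of "u - 3 * w" "u + 3 * w" 4] by simp
qed

(* Multiplicativity of the norm x^2 + 7y^2 applied to 3 - sqrt(-7), of norm 16. *)
lemma quadratic_identity_1_4_7:
  fixes y c x :: int
  shows "(3 * y + 7 * c)\<^sup>2 + 4 * x\<^sup>2 + 7 * (y - 3 * c)\<^sup>2 = 4 * (x\<^sup>2 + 4 * y\<^sup>2 + 7 * (2 * c)\<^sup>2)"
  by (simp add: power2_eq_square algebra_simps)

lemma odd_reps_1_4_7_normalized_eq_image:
  assumes "m mod 8 = 5"
  shows "odd_reps 1 4 7 (4 * m) \<inter> {(u, v, w). 16 dvd u - 3 * w}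
       = (\<lambda>(x, y, c). (3 * y + 7 * c, x, y - 3 * c)) ` {(x, y, c). (x, y, 2 * c) \<in> reps 1 4 7 m}"
    (is "?S = ?f ` ?P")
proof (intro equalityI subsetI)
  fix s assume "s \<in> ?S"
  then obtain u v w c where s: "s = (u, v, w)" and eq: "u\<^sup>2 + 4 * v\<^sup>2 + 7 * w\<^sup>2 = 4 * m"
    and c: "u - 3 * w = 16 * c"
    by (auto simp: odd_reps_def elim!: dvdE)
  define y where "y = w + 3 * c"
  have "u = 3 * y + 7 * c" "w = y - 3 * c" using c by (simp_all add: y_def)
  with eq quadratic_identity_1_4_7[of y c v] have "(v, y, 2 * c) \<in> reps 1 4 7 m" by (simp add: reps_def)
  with s \<open>u = 3 * y + 7 * c\<close> \<open>w = y - 3 * c\<close> show "s \<in> ?f ` ?P"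
    by (intro image_eqI[of _ _ "(v, y, c)"]) auto
next
  fix s assume "s \<in> ?f ` ?P"
  then obtain x y c where s: "s = ?f (x, y, c)" and rep: "(x, y, 2 * c) \<in> reps 1 4 7 m" by auto
  from reps_1_4_7_parities[OF rep assms] have "odd x" "odd (y + c)" by presburger+
  then have "odd (3 * y + 7 * c)" "odd (y - 3 * c)" by simp_all
  with \<open>odd x\<close> rep quadratic_identity_1_4_7[of y c x] show "s \<in> ?S" by (simp add: s odd_reps_def reps_def)
qed

lemma reps_1_4_7_eq_image:
  assumes "m mod 8 = 5"
  shows "reps 1 4 7 m = (\<lambda>(x, y, c). (x, y, 2 * c)) ` {(x, y, c). (x, y, 2 * c) \<in> reps 1 4 7 m}"
proof (intro equalityI subsetI)
  fix s assume "s \<in> reps 1 4 7 m"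
  moreover obtain x y z where s: "s = (x, y, z)" by (cases s)
  ultimately have "(z + 2 * y) mod 4 = 2" using reps_1_4_7_parities assms by blast
  then have "z = 2 * (z div 2)" by presburger
  with \<open>s \<in> reps 1 4 7 m\<close> show "s \<in> (\<lambda>(x, y, c). (x, y, 2 * c)) ` {(x, y, c). (x, y, 2 * c) \<in> reps 1 4 7 m}"
    by (intro image_eqI[of _ _ "(x, y, z div 2)"]) (auto simp: s)
qed auto

lemma card_odd_reps_1_4_7:
  assumes "m mod 8 = 5"
  shows "card (odd_reps 1 4 7 (4 * m)) = 2 * card (reps 1 4 7 m)"
proof -
  define P where "P = {(x, y, c). (x, y, 2 * c) \<in> reps 1 4 7 m}"
  have "card (odd_reps 1 4 7 (4 * m))
      = 2 * card (odd_reps 1 4 7 (4 * m) \<inter> {(u, v, w). 16 dvd u - 3 * w})"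
    by (rule card_eq_twice_card_Int_if_involution[where f = "\<lambda>(u, v, w). (u, v, - w)"])
      (auto simp: odd_reps_def odd_reps_1_4_7_flip_w[OF _ assms])
  also have "\<dots> = 2 * card P"
    unfolding odd_reps_1_4_7_normalized_eq_image[OF assms] P_def[symmetric]
    by (subst card_image) (auto simp: inj_on_def)
  also have "card P = card (reps 1 4 7 m)"
    by (subst reps_1_4_7_eq_image[OF assms], fold P_def, subst card_image) (auto simp: inj_on_def)
  finally show ?thesis .
qed

section \<open>The form x^2 + 7y^2 + 28z^2\<close>

lemma reps_1_7_28_parities:
  assumes "(x, y, z) \<in> reps 1 7 28 m" "m mod 8 = 3"
  shows "odd y \<and> (x + 2 * z) mod 4 = 2"
  using ternary_rep_parities[of 7 y 1 x 28 z m] assms by (simp add: reps_def ac_simps)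

lemma odd_reps_1_7_28_flip_v:
  assumes "(u, v, w) \<in> odd_reps 1 7 28 (4 * m)" "m mod 8 = 3"
  shows "16 dvd u + 3 * v \<longleftrightarrow> \<not> 16 dvd u - 3 * v"
proof -
  from assms(1) have "odd u" "odd v" "odd w" and eq: "u\<^sup>2 + 7 * v\<^sup>2 + 28 * w\<^sup>2 = 4 * m"
    by (simp_all add: odd_reps_def)
  obtain j k where "v\<^sup>2 = 8 * j + 1" "w\<^sup>2 = 8 * k + 1"
    using \<open>odd v\<close> \<open>odd w\<close> by (meson odd_squareE)
  moreover obtain i where "m = 8 * i + 3" using assms(2) by (metis mod_div_mult_eq add.commute mult.commute)
  ultimately have "u\<^sup>2 - 9 * v\<^sup>2 = 32 * (i - 4 * j - 7 * k - 1)" using eq by simp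
  moreover have "(u - 3 * v) * (u + 3 * v) = u\<^sup>2 - 9 * v\<^sup>2" by (simp add: power2_eq_square algebra_simps)
  ultimately have "32 dvd (u - 3 * v) * (u + 3 * v)" by simp
  moreover have "(u - 3 * v + (u + 3 * v)) mod 4 = 2" using \<open>odd u\<close> by presburger
  moreover have "even (u - 3 * v)" using \<open>odd u\<close> \<open>odd v\<close> by simp
  ultimately show ?thesis using dvd_exactly_one_of_mult[of "u - 3 * v" "u + 3 * v" 4] by simp
qed

lemma quadratic_identity_1_7_28:
  fixes a z y :: int
  shows "(3 * a + 7 * z)\<^sup>2 + 7 * (a - 3 * z)\<^sup>2 + 28 * y\<^sup>2 = 4 * ((2 * a)\<^sup>2 + 7 * y\<^sup>2 + 28 * z\<^sup>2)"
  by (simp add: power2_eq_square algebra_simps)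

lemma odd_reps_1_7_28_normalized_eq_image:
  assumes "m mod 8 = 3"
  shows "odd_reps 1 7 28 (4 * m) \<inter> {(u, v, w). 16 dvd u - 3 * v}
       = (\<lambda>(a, y, z). (3 * a + 7 * z, a - 3 * z, y)) ` {(a, y, z). (2 * a, y, z) \<in> reps 1 7 28 m}"
    (is "?S = ?f ` ?P")
proof (intro equalityI subsetI)
  fix s assume "s \<in> ?S"
  then obtain u v w z where s: "s = (u, v, w)" and eq: "u\<^sup>2 + 7 * v\<^sup>2 + 28 * w\<^sup>2 = 4 * m"
    and z: "u - 3 * v = 16 * z"
    by (auto simp: odd_reps_def elim!: dvdE)
  define a where "a = v + 3 * z"
  have "u = 3 * a + 7 * z" "v = a - 3 * z" using z by (simp_all add: a_def)
  with eq quadratic_identity_1_7_28[of a z w] have "(2 * a, w, z) \<in> reps 1 7 28 m" by (simp add: reps_def)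
  with s \<open>u = 3 * a + 7 * z\<close> \<open>v = a - 3 * z\<close> show "s \<in> ?f ` ?P"
    by (intro image_eqI[of _ _ "(a, w, z)"]) auto
next
  fix s assume "s \<in> ?f ` ?P"
  then obtain a y z where s: "s = ?f (a, y, z)" and rep: "(2 * a, y, z) \<in> reps 1 7 28 m" by auto
  from reps_1_7_28_parities[OF rep assms] have "odd y" "odd (a + z)" by presburger+
  then have "odd (3 * a + 7 * z)" "odd (a - 3 * z)" by simp_all
  with \<open>odd y\<close> rep quadratic_identity_1_7_28[of a z y] show "s \<in> ?S" by (simp add: s odd_reps_def reps_def)
qed

lemma reps_1_7_28_eq_image:
  assumes "m mod 8 = 3"
  shows "reps 1 7 28 m = (\<lambda>(a, y, z). (2 * a, y, z)) ` {(a, y, z). (2 * a, y, z) \<in> reps 1 7 28 m}"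
proof (intro equalityI subsetI)
  fix s assume "s \<in> reps 1 7 28 m"
  moreover obtain x y z where s: "s = (x, y, z)" by (cases s)
  ultimately have "(x + 2 * z) mod 4 = 2" using reps_1_7_28_parities assms by blast
  then have "x = 2 * (x div 2)" by presburger
  with \<open>s \<in> reps 1 7 28 m\<close> show "s \<in> (\<lambda>(a, y, z). (2 * a, y, z)) ` {(a, y, z). (2 * a, y, z) \<in> reps 1 7 28 m}"
    by (intro image_eqI[of _ _ "(x div 2, y, z)"]) (auto simp: s)
qed auto

lemma card_odd_reps_1_7_28:
  assumes "m mod 8 = 3"
  shows "card (odd_reps 1 7 28 (4 * m)) = 2 * card (reps 1 7 28 m)"
proof -
  define P where "P = {(a, y, z). (2 * a, y, z) \<in> reps 1 7 28 m}"
  have "card (odd_reps 1 7 28 (4 * m))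
      = 2 * card (odd_reps 1 7 28 (4 * m) \<inter> {(u, v, w). 16 dvd u - 3 * v})"
    by (rule card_eq_twice_card_Int_if_involution[where f = "\<lambda>(u, v, w). (u, - v, w)"])
      (auto simp: odd_reps_def odd_reps_1_7_28_flip_v[OF _ assms])
  also have "\<dots> = 2 * card P"
    unfolding odd_reps_1_7_28_normalized_eq_image[OF assms] P_def[symmetric]
    by (subst card_image) (auto simp: inj_on_def)
  also have "card P = card (reps 1 7 28 m)"
    by (subst reps_1_7_28_eq_image[OF assms], fold P_def, subst card_image) (auto simp: inj_on_def)
  finally show ?thesis .
qed

section \<open>The form x^2 + 7y^2 + 12z^2\<close>

lemma reps_1_7_12_parities:
  assumes "(x, y, z) \<in> reps 1 7 12 m" "m mod 8 = 3"
  shows "odd y \<and> (x + 2 * z) mod 4 = 2"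
  using ternary_rep_parities[of 7 y 1 x 12 z m] assms by (simp add: reps_def ac_simps)

lemma reps_1_7_12_flip_y:
  assumes "(x, y, z) \<in> reps 1 7 12 m" "m mod 8 = 3"
  shows "8 dvd x - 2 * y - 2 * z - 4 \<longleftrightarrow> \<not> 8 dvd x + 2 * y - 2 * z - 4"
  using reps_1_7_12_parities[OF assms] by presburger

lemma odd_reps_1_7_12_flip_v:
  assumes "(u, v, w) \<in> odd_reps 1 7 12 (4 * m)" "m mod 8 = 3"
  shows "16 dvd u + 3 * v - 8 \<longleftrightarrow> \<not> 16 dvd u - 3 * v - 8"
proof -
  from assms(1) have "odd u" "odd v" "odd w" and eq: "u\<^sup>2 + 7 * v\<^sup>2 + 12 * w\<^sup>2 = 4 * m"
    by (simp_all add: odd_reps_def)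
  obtain j k where "v\<^sup>2 = 8 * j + 1" "w\<^sup>2 = 8 * k + 1"
    using \<open>odd v\<close> \<open>odd w\<close> by (meson odd_squareE)
  moreover obtain i where "m = 8 * i + 3" using assms(2) by (metis mod_div_mult_eq add.commute mult.commute)
  ultimately have "u\<^sup>2 - 9 * v\<^sup>2 = 16 + 32 * (i - 4 * j - 3 * k - 1)" using eq by simp
  moreover have "(u - 3 * v) * (u + 3 * v) = u\<^sup>2 - 9 * v\<^sup>2" by (simp add: power2_eq_square algebra_simps)
  ultimately have "((u - 3 * v) * (u + 3 * v)) mod 32 = 16" by (simp only: mod_mult_self2) simp
  moreover have "(u - 3 * v + (u + 3 * v)) mod 4 = 2" using \<open>odd u\<close> by presburger
  moreover have "even (u - 3 * v)" using \<open>odd u\<close> \<open>odd v\<close> by simp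
  ultimately show ?thesis by (simp add: dvd_16_exactly_one_of_mult_mod32_eq_16)
qed

lemma odd_reps_1_7_12_flip_w:
  assumes "(u, v, w) \<in> odd_reps 1 7 12 (4 * m)" "16 dvd u - 3 * v - 8"
  shows "32 dvd 3 * u + 7 * v + 8 * w \<longleftrightarrow> \<not> 32 dvd 3 * u + 7 * v - 8 * w"
  using assms dvd_32_add_iff_not_dvd_diff[OF dvd_16_3_add_7_of_dvd_16_sub_3] by (simp add: odd_reps_def)

lemma quadratic_identity_1_7_12:
  fixes v y z :: int
  shows "(3 * v + 8 * y)\<^sup>2 + 7 * v\<^sup>2 + 12 * (2 * v + 3 * y - 4 * z)\<^sup>2
      = 4 * ((2 * (2 * v + 3 * y - 3 * z))\<^sup>2 + 7 * y\<^sup>2 + 12 * z\<^sup>2)"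
  by (simp add: power2_eq_square algebra_simps)

lemma odd_reps_1_7_12_normalized_eq_image:
  assumes "m mod 8 = 3"
  shows "odd_reps 1 7 12 (4 * m) \<inter> {(u, v, w). 16 dvd u - 3 * v - 8}
           \<inter> {(u, v, w). 32 dvd 3 * u + 7 * v - 8 * w}
       = (\<lambda>(v, y, z). (3 * v + 8 * y, v, 2 * v + 3 * y - 4 * z))
           ` {(v, y, z). odd v \<and> (2 * (2 * v + 3 * y - 3 * z), y, z) \<in> reps 1 7 12 m}"
    (is "?S = ?f ` ?P")
proof (intro equalityI subsetI)
  fix s assume "s \<in> ?S"
  then obtain u v w k z where s: "s = (u, v, w)" and "odd v"
    and eq: "u\<^sup>2 + 7 * v\<^sup>2 + 12 * w\<^sup>2 = 4 * m"
    and k: "u - 3 * v - 8 = 16 * k" and z: "3 * u + 7 * v - 8 * w = 32 * z"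
    by (auto simp: odd_reps_def elim!: dvdE)
  define y where "y = 2 * k + 1"
  have "u = 3 * v + 8 * y" using k by (simp add: y_def)
  moreover from this z have "w = 2 * v + 3 * y - 4 * z" by simp
  ultimately have "s = ?f (v, y, z)" "(2 * (2 * v + 3 * y - 3 * z), y, z) \<in> reps 1 7 12 m"
    using s eq quadratic_identity_1_7_12[of v y z] by (simp_all add: reps_def)
  with \<open>odd v\<close> show "s \<in> ?f ` ?P" by (intro image_eqI[of _ _ "(v, y, z)"]) auto
next
  fix s assume "s \<in> ?f ` ?P"
  then obtain v y z where s: "s = ?f (v, y, z)" and "odd v"
    and rep: "(2 * (2 * v + 3 * y - 3 * z), y, z) \<in> reps 1 7 12 m" by auto
  from reps_1_7_12_parities[OF rep assms] have "odd y" by simp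
  then have "16 dvd 8 * y - 8" by presburger
  with \<open>odd v\<close> \<open>odd y\<close> rep quadratic_identity_1_7_12[of v y z] show "s \<in> ?S"
    by (simp add: s odd_reps_def reps_def algebra_simps)
qed

lemma reps_1_7_12_normalized_eq_image:
  "reps 1 7 12 m \<inter> {(x, y, z). 8 dvd x + 2 * y - 2 * z - 4}
     = (\<lambda>(v, y, z). (2 * (2 * v + 3 * y - 3 * z), y, z))
         ` {(v, y, z). odd v \<and> (2 * (2 * v + 3 * y - 3 * z), y, z) \<in> reps 1 7 12 m}"
    (is "?M = ?g ` ?P")
proof (intro equalityI subsetI)
  fix s assume "s \<in> ?M"
  then obtain x y z k where s: "s = (x, y, z)" and rep: "(x, y, z) \<in> reps 1 7 12 m"
    and k: "x + 2 * y - 2 * z - 4 = 8 * k" by (auto elim!: dvdE)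
  define v where "v = 2 * k + 1 - 2 * y + 2 * z"
  have "x = 2 * (2 * v + 3 * y - 3 * z)" "odd v" using k by (simp_all add: v_def)
  with rep s show "s \<in> ?g ` ?P" by (intro image_eqI[of _ _ "(v, y, z)"]) auto
next
  fix s assume "s \<in> ?g ` ?P"
  then obtain v y z where s: "s = ?g (v, y, z)" and "odd v"
    and "(2 * (2 * v + 3 * y - 3 * z), y, z) \<in> reps 1 7 12 m" by auto
  moreover from \<open>odd v\<close> have "8 dvd 4 * v + 8 * y - 8 * z - 4" by presburger
  ultimately show "s \<in> ?M" by (simp add: algebra_simps)
qed

lemma card_odd_reps_1_7_12:
  assumes "m mod 8 = 3"
  shows "card (odd_reps 1 7 12 (4 * m)) = 2 * card (reps 1 7 12 m)"
proof -
  define P where "P = {(v, y, z). odd v \<and> (2 * (2 * v + 3 * y - 3 * z), y, z) \<in> reps 1 7 12 m}"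
  let ?S = "odd_reps 1 7 12 (4 * m)"
  let ?H1 = "{(u, v, w). 16 dvd u - 3 * v - 8}"
  let ?H2 = "{(u, v, w). 32 dvd 3 * u + 7 * v - 8 * w}"
  let ?H = "{(x, y, z). 8 dvd x + 2 * y - 2 * z - 4}"
  have "card ?S = 2 * card (?S \<inter> ?H1)"
    by (rule card_eq_twice_card_Int_if_involution[where f = "\<lambda>(u, v, w). (u, - v, w)"])
      (auto simp: odd_reps_def odd_reps_1_7_12_flip_v[OF _ assms])
  also have "card (?S \<inter> ?H1) = 2 * card (?S \<inter> ?H1 \<inter> ?H2)"
    by (rule card_eq_twice_card_Int_if_involution[where f = "\<lambda>(u, v, w). (u, v, - w)"])
      (auto simp: odd_reps_def odd_reps_1_7_12_flip_w)
  also have "card (?S \<inter> ?H1 \<inter> ?H2) = card P"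
    unfolding odd_reps_1_7_12_normalized_eq_image[OF assms] P_def[symmetric]
    by (subst card_image) (auto simp: inj_on_def)
  also have "card P = card (reps 1 7 12 m \<inter> ?H)"
    unfolding reps_1_7_12_normalized_eq_image P_def[symmetric]
    by (subst card_image) (auto simp: inj_on_def)
  also have "2 * (2 * card (reps 1 7 12 m \<inter> ?H)) = 2 * card (reps 1 7 12 m)"
    by (subst card_eq_twice_card_Int_if_involution[where A = "reps 1 7 12 m" and H = ?H
          and f = "\<lambda>(x, y, z). (x, - y, z)"])
      (auto simp: reps_def reps_1_7_12_flip_y[OF _ assms])
  finally show ?thesis .
qed

section \<open>The form 3x^2 + 4y^2 + 21z^2\<close>

lemma reps_3_4_21_parities:
  assumes "(x, y, z) \<in> reps 3 4 21 m" "m mod 8 = 1"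
  shows "odd z \<and> (x + 2 * y) mod 4 = 2"
  using ternary_rep_parities[of 21 z 3 x 4 y m] assms by (simp add: reps_def ac_simps)

lemma reps_3_4_21_flip_z:
  assumes "(x, y, z) \<in> reps 3 4 21 m" "m mod 8 = 1"
  shows "8 dvd x + 2 * y - 2 * z - 4 \<longleftrightarrow> \<not> 8 dvd x + 2 * y + 2 * z - 4"
  using reps_3_4_21_parities[OF assms] by presburger

lemma odd_reps_3_4_21_flip_w:
  assumes "(u, v, w) \<in> odd_reps 3 4 21 (4 * m)" "m mod 8 = 1"
  shows "16 dvd u + 3 * w - 8 \<longleftrightarrow> \<not> 16 dvd u - 3 * w - 8"
proof -
  from assms(1) have "odd u" "odd v" "odd w" and eq: "3 * u\<^sup>2 + 4 * v\<^sup>2 + 21 * w\<^sup>2 = 4 * m"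
    by (simp_all add: odd_reps_def)
  obtain j k where "v\<^sup>2 = 8 * j + 1" "w\<^sup>2 = 8 * k + 1"
    using \<open>odd v\<close> \<open>odd w\<close> by (meson odd_squareE)
  moreover obtain i where "m = 8 * i + 1" using assms(2) by (metis mod_div_mult_eq add.commute mult.commute)
  ultimately have "3 * (u\<^sup>2 - 9 * w\<^sup>2) = 16 + 32 * (i - j - 12 * k - 2)" using eq by simp
  then have "(u\<^sup>2 - 9 * w\<^sup>2) mod 32 = 16" by (rule mod32_eq_16_of_three_mult)
  moreover have "(u - 3 * w) * (u + 3 * w) = u\<^sup>2 - 9 * w\<^sup>2" by (simp add: power2_eq_square algebra_simps)
  ultimately have "((u - 3 * w) * (u + 3 * w)) mod 32 = 16" by simp
  moreover have "(u - 3 * w + (u + 3 * w)) mod 4 = 2" using \<open>odd u\<close> by presburger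
  moreover have "even (u - 3 * w)" using \<open>odd u\<close> \<open>odd w\<close> by simp
  ultimately show ?thesis by (simp add: dvd_16_exactly_one_of_mult_mod32_eq_16)
qed

lemma odd_reps_3_4_21_flip_v:
  assumes "(u, v, w) \<in> odd_reps 3 4 21 (4 * m)" "16 dvd u - 3 * w - 8"
  shows "32 dvd 3 * u + 7 * w - 8 * v \<longleftrightarrow> \<not> 32 dvd 3 * u + 7 * w + 8 * v"
  using assms dvd_32_add_iff_not_dvd_diff[OF dvd_16_3_add_7_of_dvd_16_sub_3[OF assms(2)], of v]
  by (auto simp: odd_reps_def)

lemma quadratic_identity_3_4_21:
  fixes w z y :: int
  shows "3 * (3 * w + 8 * z)\<^sup>2 + 4 * (6 * w - 4 * y + 9 * z)\<^sup>2 + 21 * w\<^sup>2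
      = 4 * (3 * (2 * (2 * w - y + 3 * z))\<^sup>2 + 4 * y\<^sup>2 + 21 * z\<^sup>2)"
  by (simp add: power2_eq_square algebra_simps)

lemma odd_reps_3_4_21_normalized_eq_image:
  assumes "m mod 8 = 1"
  shows "odd_reps 3 4 21 (4 * m) \<inter> {(u, v, w). 16 dvd u - 3 * w - 8}
           \<inter> {(u, v, w). 32 dvd 3 * u + 7 * w + 8 * v}
       = (\<lambda>(w, y, z). (3 * w + 8 * z, 6 * w - 4 * y + 9 * z, w))
           ` {(w, y, z). odd w \<and> (2 * (2 * w - y + 3 * z), y, z) \<in> reps 3 4 21 m}"
    (is "?S = ?f ` ?P")
proof (intro equalityI subsetI)
  fix s assume "s \<in> ?S"
  then obtain u v w k q where s: "s = (u, v, w)" and "odd w"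
    and eq: "3 * u\<^sup>2 + 4 * v\<^sup>2 + 21 * w\<^sup>2 = 4 * m"
    and k: "u - 3 * w - 8 = 16 * k" and q: "3 * u + 7 * w + 8 * v = 32 * q"
    by (auto simp: odd_reps_def elim!: dvdE)
  define z where "z = 2 * k + 1"
  define y where "y = 2 * w + 3 * z - q"
  have "u = 3 * w + 8 * z" using k by (simp add: z_def)
  moreover from this q have "v = 6 * w - 4 * y + 9 * z" by (simp add: y_def)
  ultimately have "s = ?f (w, y, z)" "(2 * (2 * w - y + 3 * z), y, z) \<in> reps 3 4 21 m"
    using s eq quadratic_identity_3_4_21[of w z y] by (simp_all add: reps_def)
  with \<open>odd w\<close> show "s \<in> ?f ` ?P" by (intro image_eqI[of _ _ "(w, y, z)"]) auto
next
  fix s assume "s \<in> ?f ` ?P"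
  then obtain w y z where s: "s = ?f (w, y, z)" and "odd w"
    and rep: "(2 * (2 * w - y + 3 * z), y, z) \<in> reps 3 4 21 m" by auto
  from reps_3_4_21_parities[OF rep assms] have "odd z" by simp
  then have "16 dvd 3 * w + 8 * z - 3 * w - 8" by presburger
  moreover have "32 dvd 3 * (3 * w + 8 * z) + 7 * w + 8 * (6 * w - 4 * y + 9 * z)"
    by (rule dvdI[where k = "2 * w - y + 3 * z"]) simp
  ultimately show "s \<in> ?S" using \<open>odd w\<close> \<open>odd z\<close> rep quadratic_identity_3_4_21[of w z y]
    by (simp add: s odd_reps_def reps_def)
qed

lemma reps_3_4_21_normalized_eq_image:
  "reps 3 4 21 m \<inter> {(x, y, z). 8 dvd x + 2 * y + 2 * z - 4}
     = (\<lambda>(w, y, z). (2 * (2 * w - y + 3 * z), y, z))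
         ` {(w, y, z). odd w \<and> (2 * (2 * w - y + 3 * z), y, z) \<in> reps 3 4 21 m}"
    (is "?M = ?g ` ?P")
proof (intro equalityI subsetI)
  fix s assume "s \<in> ?M"
  then obtain x y z k where s: "s = (x, y, z)" and rep: "(x, y, z) \<in> reps 3 4 21 m"
    and k: "x + 2 * y + 2 * z - 4 = 8 * k" by (auto elim!: dvdE)
  define w where "w = 2 * k + 1 - 2 * z"
  have "x = 2 * (2 * w - y + 3 * z)" "odd w" using k by (simp_all add: w_def)
  with rep s show "s \<in> ?g ` ?P" by (intro image_eqI[of _ _ "(w, y, z)"]) auto
next
  fix s assume "s \<in> ?g ` ?P"
  then obtain w y z where s: "s = ?g (w, y, z)" and "odd w"
    and "(2 * (2 * w - y + 3 * z), y, z) \<in> reps 3 4 21 m" by auto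
  moreover from \<open>odd w\<close> have "8 dvd 2 * (2 * w - y + 3 * z) + 2 * y + 2 * z - 4" by presburger
  ultimately show "s \<in> ?M" by simp
qed

lemma card_odd_reps_3_4_21:
  assumes "m mod 8 = 1"
  shows "card (odd_reps 3 4 21 (4 * m)) = 2 * card (reps 3 4 21 m)"
proof -
  define P where "P = {(w, y, z). odd w \<and> (2 * (2 * w - y + 3 * z), y, z) \<in> reps 3 4 21 m}"
  let ?S = "odd_reps 3 4 21 (4 * m)"
  let ?H1 = "{(u, v, w). 16 dvd u - 3 * w - 8}"
  let ?H2 = "{(u, v, w). 32 dvd 3 * u + 7 * w + 8 * v}"
  let ?H = "{(x, y, z). 8 dvd x + 2 * y + 2 * z - 4}"
  have "card ?S = 2 * card (?S \<inter> ?H1)"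
    by (rule card_eq_twice_card_Int_if_involution[where f = "\<lambda>(u, v, w). (u, v, - w)"])
      (auto simp: odd_reps_def odd_reps_3_4_21_flip_w[OF _ assms])
  also have "card (?S \<inter> ?H1) = 2 * card (?S \<inter> ?H1 \<inter> ?H2)"
    by (rule card_eq_twice_card_Int_if_involution[where f = "\<lambda>(u, v, w). (u, - v, w)"])
      (auto simp: odd_reps_def odd_reps_3_4_21_flip_v)
  also have "card (?S \<inter> ?H1 \<inter> ?H2) = card P"
    unfolding odd_reps_3_4_21_normalized_eq_image[OF assms] P_def[symmetric]
    by (subst card_image) (auto simp: inj_on_def)
  also have "card P = card (reps 3 4 21 m \<inter> ?H)"
    unfolding reps_3_4_21_normalized_eq_image P_def[symmetric]
    by (subst card_image) (auto simp: inj_on_def)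
  also have "2 * (2 * card (reps 3 4 21 m \<inter> ?H)) = 2 * card (reps 3 4 21 m)"
    by (subst card_eq_twice_card_Int_if_involution[where A = "reps 3 4 21 m" and H = ?H
          and f = "\<lambda>(x, y, z). (x, y, - z)"])
      (auto simp: reps_def reps_3_4_21_flip_z[OF _ assms])
  finally show ?thesis .
qed

section \<open>The form 3x^2 + 21y^2 + 28z^2\<close>

lemma reps_3_21_28_parities:
  assumes "(x, y, z) \<in> reps 3 21 28 m" "m mod 8 = 7"
  shows "odd x \<and> (y + 2 * z) mod 4 = 2"
  using ternary_rep_parities[of 3 x 21 y 28 z m] assms by (simp add: reps_def)

lemma reps_3_21_28_flip_x:
  assumes "(x, y, z) \<in> reps 3 21 28 m" "m mod 8 = 7"
  shows "8 dvd y - 2 * x + 2 * z - 4 \<longleftrightarrow> \<not> 8 dvd 2 * x + y + 2 * z - 4"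
  using reps_3_21_28_parities[OF assms] by presburger

lemma odd_reps_3_21_28_flip_v:
  assumes "(u, v, w) \<in> odd_reps 3 21 28 (4 * m)" "m mod 8 = 7"
  shows "16 dvd u + 3 * v - 8 \<longleftrightarrow> \<not> 16 dvd u - 3 * v - 8"
proof -
  from assms(1) have "odd u" "odd v" "odd w" and eq: "3 * u\<^sup>2 + 21 * v\<^sup>2 + 28 * w\<^sup>2 = 4 * m"
    by (simp_all add: odd_reps_def)
  obtain j k where "v\<^sup>2 = 8 * j + 1" "w\<^sup>2 = 8 * k + 1"
    using \<open>odd v\<close> \<open>odd w\<close> by (meson odd_squareE)
  moreover obtain i where "m = 8 * i + 7" using assms(2) by (metis mod_div_mult_eq add.commute mult.commute)
  ultimately have "3 * (u\<^sup>2 - 9 * v\<^sup>2) = 16 + 32 * (i - 12 * j - 7 * k - 2)" using eq by simp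
  then have "(u\<^sup>2 - 9 * v\<^sup>2) mod 32 = 16" by (rule mod32_eq_16_of_three_mult)
  moreover have "(u - 3 * v) * (u + 3 * v) = u\<^sup>2 - 9 * v\<^sup>2" by (simp add: power2_eq_square algebra_simps)
  ultimately have "((u - 3 * v) * (u + 3 * v)) mod 32 = 16" by simp
  moreover have "(u - 3 * v + (u + 3 * v)) mod 4 = 2" using \<open>odd u\<close> by presburger
  moreover have "even (u - 3 * v)" using \<open>odd u\<close> \<open>odd v\<close> by simp
  ultimately show ?thesis by (simp add: dvd_16_exactly_one_of_mult_mod32_eq_16)
qed

lemma odd_reps_3_21_28_flip_w:
  assumes "(u, v, w) \<in> odd_reps 3 21 28 (4 * m)" "16 dvd u - 3 * v - 8"
  shows "32 dvd u - 3 * v - 8 * w \<longleftrightarrow> \<not> 32 dvd u - 3 * v + 8 * w"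
  using assms dvd_32_add_iff_not_dvd_diff[OF assms(2), of w] by (auto simp: odd_reps_def)

lemma quadratic_identity_3_21_28:
  fixes v b z :: int
  shows "3 * (3 * v + 8 * (b + z))\<^sup>2 + 21 * v\<^sup>2 + 28 * (3 * b - z)\<^sup>2
      = 4 * (3 * (2 * v + 3 * b + 3 * z)\<^sup>2 + 21 * (2 * b)\<^sup>2 + 28 * z\<^sup>2)"
  by (simp add: power2_eq_square algebra_simps)

lemma odd_reps_3_21_28_normalized_eq_image:
  assumes "m mod 8 = 7"
  shows "odd_reps 3 21 28 (4 * m) \<inter> {(u, v, w). 16 dvd u - 3 * v - 8}
           \<inter> {(u, v, w). 32 dvd u - 3 * v + 8 * w}
       = (\<lambda>(v, b, z). (3 * v + 8 * (b + z), v, 3 * b - z))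
           ` {(v, b, z). odd v \<and> (2 * v + 3 * b + 3 * z, 2 * b, z) \<in> reps 3 21 28 m}"
    (is "?S = ?f ` ?P")
proof (intro equalityI subsetI)
  fix s assume "s \<in> ?S"
  then obtain u v w k b where s: "s = (u, v, w)" and "odd v"
    and eq: "3 * u\<^sup>2 + 21 * v\<^sup>2 + 28 * w\<^sup>2 = 4 * m"
    and k: "u - 3 * v - 8 = 16 * k" and b: "u - 3 * v + 8 * w = 32 * b"
    by (auto simp: odd_reps_def elim!: dvdE)
  define z where "z = 2 * k + 1 - b"
  have "u = 3 * v + 8 * (b + z)" using k by (simp add: z_def)
  moreover from this b have "w = 3 * b - z" by (simp add: z_def)
  ultimately have "s = ?f (v, b, z)" "(2 * v + 3 * b + 3 * z, 2 * b, z) \<in> reps 3 21 28 m"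
    using s eq quadratic_identity_3_21_28[of v b z] by (simp_all add: reps_def)
  with \<open>odd v\<close> show "s \<in> ?f ` ?P" by (intro image_eqI[of _ _ "(v, b, z)"]) auto
next
  fix s assume "s \<in> ?f ` ?P"
  then obtain v b z where s: "s = ?f (v, b, z)" and "odd v"
    and rep: "(2 * v + 3 * b + 3 * z, 2 * b, z) \<in> reps 3 21 28 m" by auto
  from reps_3_21_28_parities[OF rep assms] have "odd (b + z)" by presburger
  then have "odd (3 * v + 8 * (b + z))" "odd (3 * b - z)"
    and "16 dvd 3 * v + 8 * (b + z) - 3 * v - 8"
    and "32 dvd 3 * v + 8 * (b + z) - 3 * v + 8 * (3 * b - z)"
    using \<open>odd v\<close> by presburger+
  with \<open>odd v\<close> rep quadratic_identity_3_21_28[of v b z] show "s \<in> ?S" by (simp add: s odd_reps_def reps_def)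
qed

lemma reps_3_21_28_normalized_eq_image:
  "reps 3 21 28 m \<inter> {(x, y, z). 8 dvd 2 * x + y + 2 * z - 4}
     = (\<lambda>(v, b, z). (2 * v + 3 * b + 3 * z, 2 * b, z))
         ` {(v, b, z). odd v \<and> (2 * v + 3 * b + 3 * z, 2 * b, z) \<in> reps 3 21 28 m}"
    (is "?M = ?g ` ?P")
proof (intro equalityI subsetI)
  fix s assume "s \<in> ?M"
  then obtain x y z k where s: "s = (x, y, z)" and rep: "(x, y, z) \<in> reps 3 21 28 m"
    and k: "2 * x + y + 2 * z - 4 = 8 * k" by (auto elim!: dvdE)
  define b where "b = 4 * k + 2 - x - z"
  define v where "v = 2 * x - 6 * k - 3"
  have "x = 2 * v + 3 * b + 3 * z" "y = 2 * b" "odd v" using k by (simp_all add: b_def v_def)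
  with rep s show "s \<in> ?g ` ?P" by (intro image_eqI[of _ _ "(v, b, z)"]) auto
next
  fix s assume "s \<in> ?g ` ?P"
  then obtain v b z where s: "s = ?g (v, b, z)" and "odd v"
    and "(2 * v + 3 * b + 3 * z, 2 * b, z) \<in> reps 3 21 28 m" by auto
  moreover from \<open>odd v\<close> have "8 dvd 2 * (2 * v + 3 * b + 3 * z) + 2 * b + 2 * z - 4" by presburger
  ultimately show "s \<in> ?M" by simp
qed

lemma card_odd_reps_3_21_28:
  assumes "m mod 8 = 7"
  shows "card (odd_reps 3 21 28 (4 * m)) = 2 * card (reps 3 21 28 m)"
proof -
  define P where "P = {(v, b, z). odd v \<and> (2 * v + 3 * b + 3 * z, 2 * b, z) \<in> reps 3 21 28 m}"
  let ?S = "odd_reps 3 21 28 (4 * m)"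
  let ?H1 = "{(u, v, w). 16 dvd u - 3 * v - 8}"
  let ?H2 = "{(u, v, w). 32 dvd u - 3 * v + 8 * w}"
  let ?H = "{(x, y, z). 8 dvd 2 * x + y + 2 * z - 4}"
  have "card ?S = 2 * card (?S \<inter> ?H1)"
    by (rule card_eq_twice_card_Int_if_involution[where f = "\<lambda>(u, v, w). (u, - v, w)"])
      (auto simp: odd_reps_def odd_reps_3_21_28_flip_v[OF _ assms])
  also have "card (?S \<inter> ?H1) = 2 * card (?S \<inter> ?H1 \<inter> ?H2)"
    by (rule card_eq_twice_card_Int_if_involution[where f = "\<lambda>(u, v, w). (u, v, - w)"])
      (auto simp: odd_reps_def odd_reps_3_21_28_flip_w)
  also have "card (?S \<inter> ?H1 \<inter> ?H2) = card P"
    unfolding odd_reps_3_21_28_normalized_eq_image[OF assms] P_def[symmetric]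
    by (subst card_image) (auto simp: inj_on_def)
  also have "card P = card (reps 3 21 28 m \<inter> ?H)"
    unfolding reps_3_21_28_normalized_eq_image P_def[symmetric]
    by (subst card_image) (auto simp: inj_on_def)
  also have "2 * (2 * card (reps 3 21 28 m \<inter> ?H)) = 2 * card (reps 3 21 28 m)"
    by (subst card_eq_twice_card_Int_if_involution[where A = "reps 3 21 28 m" and H = ?H
          and f = "\<lambda>(x, y, z). (- x, y, z)"])
      (auto simp: reps_def reps_3_21_28_flip_x[OF _ assms])
  finally show ?thesis .
qed

theorem theorem5p1:
  fixes n :: nat
  assumes "n > 0"
  shows "(n mod 4 = 1 \<longrightarrow> t 1 4 7 n = 2 * N 1 4 7 (2 * n + 3))
       \<and> (n mod 4 = 3 \<longrightarrow> t 1 7 12 n = 2 * N 1 7 12 (2 * n + 5))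
       \<and> (n mod 4 = 1 \<longrightarrow> t 1 7 28 n = 2 * N 1 7 28 (2 * n + 9))
       \<and> (n mod 4 = 1 \<longrightarrow> t 3 4 21 n = 2 * N 3 4 21 (2 * n + 7))
       \<and> (n mod 4 = 1 \<longrightarrow> t 3 21 28 n = 2 * N 3 21 28 (2 * n + 13))"
proof (intro conjI impI)
  assume "n mod 4 = 1"
  then have "int (2 * n + 3) mod 8 = 5" by presburger
  then show "t 1 4 7 n = 2 * N 1 4 7 (2 * n + 3)"
    by (intro t_eq_twice_N_if_card_odd_reps) (simp_all add: card_odd_reps_1_4_7 del: of_nat_add of_nat_mult)
next
  assume "n mod 4 = 3"
  then have "int (2 * n + 5) mod 8 = 3" by presburger
  then show "t 1 7 12 n = 2 * N 1 7 12 (2 * n + 5)"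
    by (intro t_eq_twice_N_if_card_odd_reps) (simp_all add: card_odd_reps_1_7_12 del: of_nat_add of_nat_mult)
next
  assume "n mod 4 = 1"
  then have "int (2 * n + 9) mod 8 = 3" by presburger
  then show "t 1 7 28 n = 2 * N 1 7 28 (2 * n + 9)"
    by (intro t_eq_twice_N_if_card_odd_reps) (simp_all add: card_odd_reps_1_7_28 del: of_nat_add of_nat_mult)
next
  assume "n mod 4 = 1"
  then have "int (2 * n + 7) mod 8 = 1" by presburger
  then show "t 3 4 21 n = 2 * N 3 4 21 (2 * n + 7)"
    by (intro t_eq_twice_N_if_card_odd_reps) (simp_all add: card_odd_reps_3_4_21 del: of_nat_add of_nat_mult)
next
  assume "n mod 4 = 1"
  then have "int (2 * n + 13) mod 8 = 7" by presburger
  then show "t 3 21 28 n = 2 * N 3 21 28 (2 * n + 13)"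
    by (intro t_eq_twice_N_if_card_odd_reps) (simp_all add: card_odd_reps_3_21_28 del: of_nat_add of_nat_mult)
qed

end
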